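(* Let $\Lambda=\{\lambda_i\}_{i\geq 0}$ be a numerical semigroup with $\lambda_0=0<\lambda_1<\lambda_2<\cdots$, conductor $c=\lambda_k$, and let $i$ be an index with $0\leq i<k$. Then every order-$i$ seed of $\Lambda$ is at most $c+\lambda_{i+1}-\lambda_i-1$. In particular, the number of order-$i$ seeds of $\Lambda$ is at most $\lambda_{i+1}-\lambda_i$.
   Context: A numerical semigroup is a subset $\Lambda\subseteq\mathbb{N}_0$ containing $0$, closed under addition, with finite complement; the elements of $\mathbb{N}_0\setminus\Lambda$ are gaps and their number $g$ is the genus. The elements of $\Lambda$ are enumerated increasingly as $\lambda_0=0<\lambda_1<\lambda_2<\cdots$; then $\lambda_i=i+g$ for all large $i$, $k$ denotes the smallest index with $\lambda_i=i+g$ for all $i\ge k$, and the conductor is $c=\lambda_k=k+g$. For $i\geq 0$ let $\Lambda_i=\Lambda\setminus\{\lambda_1,\dots,\lambda_i\}$ (a numerical semigroup). A generator of a numerical semigroup is a nonzero element that is not the sum of two nonzero elements of the semigroup. An element $\lambda_t$ with $t\geq k$ is an order-$i$ seed of $\Lambda$ (for $0\le i<k$) if $\lambda_t+\lambda_i$ is a generator of $\Lambda_i$. *)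

theory Defs
  imports Main "HOL-Library.Infinite_Set"
begin

definition numerical_semigroup :: "nat set \<Rightarrow> bool" where
  "numerical_semigroup S \<longleftrightarrow> 0 \<in> S \<and> (\<forall>a\<in>S. \<forall>b\<in>S. a + b \<in> S) \<and> finite (UNIV - S)"

definition lam :: "nat set \<Rightarrow> nat \<Rightarrow> nat" where
  "lam S i = enumerate S i"

definition genus :: "nat set \<Rightarrow> nat" where
  "genus S = card (UNIV - S)"

definition cindex :: "nat set \<Rightarrow> nat" where
  "cindex S = (LEAST k. \<forall>i\<ge>k. lam S i = i + genus S)"

definition conductor :: "nat set \<Rightarrow> nat" where
  "conductor S = lam S (cindex S)"

definition remove_first :: "nat set \<Rightarrow> nat \<Rightarrow> nat set" where
  "remove_first S i = S - {lam S j | j. 1 \<le> j \<and> j \<le> i}"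

definition generator :: "nat set \<Rightarrow> nat \<Rightarrow> bool" where
  "generator T x \<longleftrightarrow> x \<in> T \<and> x \<noteq> 0 \<and>
     \<not> (\<exists>a\<in>T. \<exists>b\<in>T. a \<noteq> 0 \<and> b \<noteq> 0 \<and> a + b = x)"

definition seed :: "nat set \<Rightarrow> nat \<Rightarrow> nat \<Rightarrow> bool" where
  "seed S i x \<longleftrightarrow> (\<exists>t\<ge>cindex S. x = lam S t \<and> generator (remove_first S i) (lam S t + lam S i))"

end

theory Submission
  imports Defs
begin

text \<open>Every integer at least the conductor lies in \<open>\<Lambda>\<^sub>i\<close> once it exceeds \<open>\<lambda>\<^sub>i\<close>, and so
  does \<open>\<lambda>\<^sub>i\<^sub>+\<^sub>1\<close>. Hence if a seed \<open>x\<close> satisfied \<open>x \<ge> c + (\<lambda>\<^sub>i\<^sub>+\<^sub>1 - \<lambda>\<^sub>i)\<close>, then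
  \<open>x + \<lambda>\<^sub>i = (x - (\<lambda>\<^sub>i\<^sub>+\<^sub>1 - \<lambda>\<^sub>i)) + \<lambda>\<^sub>i\<^sub>+\<^sub>1\<close> would split into two nonzero elements of
  \<open>\<Lambda>\<^sub>i\<close>, so it would not be a generator. Seeds are also at least \<open>c\<close>, so they lie in an
  interval of length \<open>\<lambda>\<^sub>i\<^sub>+\<^sub>1 - \<lambda>\<^sub>i\<close>.\<close>

lemma numerical_semigroup_infinite:
  assumes "numerical_semigroup S"
  shows "infinite S"
proof
  assume "finite S"
  moreover have "finite (UNIV - S)"
    using assms by (simp add: numerical_semigroup_def)
  ultimately have "finite (S \<union> (UNIV - S))" by blast
  then show False by simp
qed

lemma lam_in: "infinite S \<Longrightarrow> lam S j \<in> S"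
  by (simp add: lam_def enumerate_in_set)

lemma lam_strict_mono: "infinite S \<Longrightarrow> strict_mono (lam S)"
  unfolding lam_def strict_mono_def by (simp add: enumerate_mono)

lemma lam_card_less:
  assumes inf: "infinite S" and s: "(s::nat) \<in> S"
  shows "lam S (card {x\<in>S. x < s}) = s"
proof -
  obtain p where p: "enumerate S p = s"
    using enumerate_Ex[OF inf s] by blast
  have "{x\<in>S. x < s} = enumerate S ` {..<p}"
  proof
    show "{x\<in>S. x < s} \<subseteq> enumerate S ` {..<p}"
    proof
      fix x assume "x \<in> {x\<in>S. x < s}"
      then have x: "x \<in> S" "x < s" by auto
      obtain q where q: "enumerate S q = x"
        using enumerate_Ex[OF inf x(1)] by blast
      have "q < p" using x(2) q p inf by (metis enumerate_mono_iff)
      then show "x \<in> enumerate S ` {..<p}" using q by auto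
    qed
    show "enumerate S ` {..<p} \<subseteq> {x\<in>S. x < s}"
      using p inf by (auto simp: enumerate_in_set)
  qed
  moreover have "inj_on (enumerate S) {..<p}"
    using inj_enumerate[OF inf] by (rule inj_on_subset) simp
  ultimately have "card {x\<in>S. x < s} = p" by (simp add: card_image)
  then show ?thesis using p by (simp add: lam_def)
qed

lemma lam_eventually_shift:
  assumes "numerical_semigroup S"
  shows "\<exists>N. \<forall>j\<ge>N. lam S j = j + genus S"
proof -
  have inf: "infinite S" and fin: "finite (UNIV - S)"
    using assms by (auto intro: numerical_semigroup_infinite simp: numerical_semigroup_def)
  obtain N where N: "\<And>n. n \<in> UNIV - S \<Longrightarrow> n < N"
    using fin unfolding finite_nat_set_iff_bounded by blast
  have "lam S j = j + genus S" if "j \<ge> N" for j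
  proof -
    let ?M = "j + genus S"
    have gaps: "UNIV - S \<subseteq> {..<?M}"
      using N that by (meson lessThan_iff less_le_trans le_add1 subsetI)
    have "{x\<in>S. x < ?M} = {..<?M} - (UNIV - S)" by auto
    then have "card {x\<in>S. x < ?M} = j"
      using gaps fin by (simp add: card_Diff_subset genus_def)
    moreover have "?M \<in> S"
      using N[of ?M] that by (meson DiffI UNIV_I le_add1 le_trans not_le)
    ultimately show ?thesis using lam_card_less[OF inf, of ?M] by metis
  qed
  then show ?thesis by blast
qed

lemma lam_ge_cindex:
  assumes "numerical_semigroup S" and "cindex S \<le> j"
  shows "lam S j = j + genus S"
proof -
  have "\<forall>j\<ge>cindex S. lam S j = j + genus S"
    unfolding cindex_def using lam_eventually_shift[OF assms(1)] by (rule LeastI_ex)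
  then show ?thesis using assms(2) by blast
qed

lemma ge_conductor_in:
  assumes "numerical_semigroup S" and "conductor S \<le> n"
  shows "n \<in> S"
proof -
  have "conductor S = cindex S + genus S"
    using lam_ge_cindex[OF assms(1)] by (simp add: conductor_def)
  then have "lam S (n - genus S) = n"
    using assms lam_ge_cindex[of S "n - genus S"] by simp
  then show ?thesis
    using lam_in numerical_semigroup_infinite[OF assms(1)] by metis
qed

lemma in_remove_first:
  assumes "infinite S" and "x \<in> S" and "lam S i < x"
  shows "x \<in> remove_first S i"
proof -
  have "lam S j < x" if "j \<le> i" for j
  proof -
    have "lam S j \<le> lam S i"
      using that by (simp add: strict_mono_less_eq[OF lam_strict_mono[OF assms(1)]])
    then show ?thesis using assms(3) by simp
  qed
  then show ?thesis using assms(2) unfolding remove_first_def by fastforce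
qed

lemma not_generator_sum:
  "a \<in> T \<Longrightarrow> b \<in> T \<Longrightarrow> a \<noteq> 0 \<Longrightarrow> b \<noteq> 0 \<Longrightarrow> \<not> generator T (a + b)"
  unfolding generator_def by blast

lemma seed_ge_conductor:
  assumes "numerical_semigroup S" and "seed S i x"
  shows "conductor S \<le> x"
proof -
  obtain t where "cindex S \<le> t" and "x = lam S t"
    using assms(2) unfolding seed_def by blast
  then show ?thesis
    using lam_strict_mono[OF numerical_semigroup_infinite[OF assms(1)]]
    by (simp add: conductor_def strict_mono_less_eq)
qed

lemma seed_less_conductor_plus_gap:
  assumes S: "numerical_semigroup S" and i: "i < cindex S" and "seed S i x"
  shows "x < conductor S + (lam S (i+1) - lam S i)"
proof (rule ccontr)
  define d where "d = lam S (i+1) - lam S i"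
  assume "\<not> x < conductor S + (lam S (i+1) - lam S i)"
  then have y: "conductor S \<le> x - d" using d_def by simp
  have inf: "infinite S" using S by (rule numerical_semigroup_infinite)
  have mono: "strict_mono (lam S)" using inf by (rule lam_strict_mono)
  have lam_i: "lam S i < conductor S"
    using i mono by (simp add: conductor_def strict_mono_less)
  have step: "lam S i < lam S (i+1)" using mono by (simp add: strict_mono_less)
  obtain t where x: "x = lam S t" and gen: "generator (remove_first S i) (lam S t + lam S i)"
    using \<open>seed S i x\<close> unfolding seed_def by blast
  have "x - d \<in> remove_first S i"
    using in_remove_first[OF inf ge_conductor_in[OF S y]] lam_i y by simp
  moreover have "lam S (i+1) \<in> remove_first S i"
    using in_remove_first[OF inf lam_in[OF inf] step] .
  moreover have "x - d \<noteq> 0" and "lam S (i+1) \<noteq> 0"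
    using lam_i y step by auto
  ultimately have "\<not> generator (remove_first S i) ((x - d) + lam S (i+1))"
    by (rule not_generator_sum)
  moreover have "(x - d) + lam S (i+1) = lam S t + lam S i"
    using x y d_def step lam_i by simp
  ultimately show False using gen by simp
qed

theorem lemma1:
  fixes S :: "nat set" and i :: nat
  assumes "numerical_semigroup S" and "i < cindex S"
  shows "(\<forall>x. seed S i x \<longrightarrow> x \<le> conductor S + lam S (i+1) - lam S i - 1)
         \<and> card {x. seed S i x} \<le> lam S (i+1) - lam S i"
proof -
  let ?c = "conductor S" and ?d = "lam S (i+1) - lam S i"
  have step: "lam S i < lam S (i+1)"
    using lam_strict_mono[OF numerical_semigroup_infinite[OF assms(1)]]
    by (simp add: strict_mono_less)
  have seeds: "{x. seed S i x} \<subseteq> {?c..<?c + ?d}"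
    using seed_ge_conductor[OF assms(1)] seed_less_conductor_plus_gap[OF assms] by auto
  then have "\<forall>x. seed S i x \<longrightarrow> x \<le> ?c + lam S (i+1) - lam S i - 1"
    using step by fastforce
  moreover have "card {x. seed S i x} \<le> ?d"
    using card_mono[OF _ seeds] by simp
  ultimately show ?thesis by blast
qed

end
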